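(* Let $\Gamma$ be a finite connected $(G,2)$-distance-transitive graph, and suppose $\Gamma\not\cong \mathrm{K}_{m[b]}$ for any $m\ge3$ and $b\ge2$. Let $N$ be a normal subgroup of $G$ maximal with respect to having at least $3$ orbits on $V(\Gamma)$. Then $N$ is semiregular on $V(\Gamma)$, $G/N$ is quasiprimitive or bi-quasiprimitive on $V(\Gamma_N)$, $\Gamma$ is a cover of $\Gamma_N$, and either $\Gamma_N$ is a complete $G/N$-arc-transitive graph or $\Gamma_N$ is a non-complete $(G/N,2)$-distance-transitive graph. Moreover, if $\Gamma$ is $G$-locally-primitive, then $\Gamma_N$ is $G/N$-locally-primitive; and if $\Gamma$ has odd order, then $\Gamma_N$ has odd order.
   Context: For $G\le\mathrm{Aut}(\Gamma)$ and $s\le d(\Gamma)$, $\Gamma$ is $(G,s)$-distance-transitive if $G$ is vertex-transitive and $G_u$ is transitive on $\Gamma_i(u)$ for all $i\le s$ and all vertices $u$. $\mathrm{K}_{m[b]}$ is the complete multipartite graph with $m$ parts of size $b$. $\Gamma_N$ is the quotient graph whose vertices are the $N$-orbits, two orbits adjacent iff some vertices in them are adjacent; $\Gamma$ is a cover of $\Gamma_N$ if for any two adjacent orbits $B,B'$ each vertex of $B$ has exactly one neighbour in $B'$. A transitive group is quasiprimitive if every nontrivial normal subgroup is transitive, and bi-quasiprimitive if every nontrivial normal subgroup has at most two orbits and some one has exactly two. $\Gamma$ is $G$-locally-primitive if $G_u$ is primitive on $\Gamma(u)$ for all $u$; $G$-arc-transitive means $G$ is transitive on arcs. *)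

theory Defs
  imports "HOL-Algebra.Algebra"
begin

definition sgraph :: "'a set \<Rightarrow> ('a \<Rightarrow> 'a \<Rightarrow> bool) \<Rightarrow> bool" where
  "sgraph V E \<longleftrightarrow> (\<forall>u v. E u v \<longrightarrow> u \<in> V \<and> v \<in> V) \<and> (\<forall>u v. E u v \<longrightarrow> E v u) \<and> (\<forall>u. \<not> E u u)"

inductive walk :: "('a \<Rightarrow> 'a \<Rightarrow> bool) \<Rightarrow> 'a \<Rightarrow> 'a \<Rightarrow> nat \<Rightarrow> bool" for E where
  walk_nil: "walk E u u 0"
| walk_cons: "E u w \<Longrightarrow> walk E w v n \<Longrightarrow> walk E u v (Suc n)"

definition connected_graph :: "'a set \<Rightarrow> ('a \<Rightarrow> 'a \<Rightarrow> bool) \<Rightarrow> bool" where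
  "connected_graph V E \<longleftrightarrow> (\<forall>u\<in>V. \<forall>v\<in>V. \<exists>n. walk E u v n)"

definition gdist :: "('a \<Rightarrow> 'a \<Rightarrow> bool) \<Rightarrow> 'a \<Rightarrow> 'a \<Rightarrow> nat" where
  "gdist E u v = (LEAST n. walk E u v n)"

definition diam :: "'a set \<Rightarrow> ('a \<Rightarrow> 'a \<Rightarrow> bool) \<Rightarrow> nat" where
  "diam V E = Max {gdist E u v | u v. u \<in> V \<and> v \<in> V}"

definition sphere :: "'a set \<Rightarrow> ('a \<Rightarrow> 'a \<Rightarrow> bool) \<Rightarrow> 'a \<Rightarrow> nat \<Rightarrow> 'a set" where
  "sphere V E u i = {v \<in> V. (\<exists>n. walk E u v n) \<and> gdist E u v = i}"

definition nbhd :: "'a set \<Rightarrow> ('a \<Rightarrow> 'a \<Rightarrow> bool) \<Rightarrow> 'a \<Rightarrow> 'a set" where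
  "nbhd V E u = {v \<in> V. E u v}"

definition complete_graph :: "'a set \<Rightarrow> ('a \<Rightarrow> 'a \<Rightarrow> bool) \<Rightarrow> bool" where
  "complete_graph V E \<longleftrightarrow> (\<forall>u\<in>V. \<forall>v\<in>V. u \<noteq> v \<longrightarrow> E u v)"

definition is_complete_multipartite :: "'a set \<Rightarrow> ('a \<Rightarrow> 'a \<Rightarrow> bool) \<Rightarrow> nat \<Rightarrow> nat \<Rightarrow> bool" where
  "is_complete_multipartite V E m b \<longleftrightarrow>
     (\<exists>P. (\<Union>P = V) \<and> (\<forall>B\<in>P. \<forall>B'\<in>P. B \<noteq> B' \<longrightarrow> B \<inter> B' = {}) \<and>
          card P = m \<and> (\<forall>B\<in>P. card B = b) \<and>
          (\<forall>u\<in>V. \<forall>v\<in>V. E u v \<longleftrightarrow> \<not> (\<exists>B\<in>P. u \<in> B \<and> v \<in> B)))"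

definition orbit_of :: "('g \<Rightarrow> 'a \<Rightarrow> 'a) \<Rightarrow> 'g set \<Rightarrow> 'a \<Rightarrow> 'a set" where
  "orbit_of phi H v = (\<lambda>h. phi h v) ` H"

definition orbits_of :: "('g \<Rightarrow> 'a \<Rightarrow> 'a) \<Rightarrow> 'g set \<Rightarrow> 'a set \<Rightarrow> 'a set set" where
  "orbits_of phi H S = orbit_of phi H ` S"

definition transitive_on :: "('g \<Rightarrow> 'a \<Rightarrow> 'a) \<Rightarrow> 'g set \<Rightarrow> 'a set \<Rightarrow> bool" where
  "transitive_on phi H S \<longleftrightarrow> (\<forall>x\<in>S. \<forall>y\<in>S. \<exists>h\<in>H. phi h x = y)"

definition stab :: "('g, 'b) monoid_scheme \<Rightarrow> ('g \<Rightarrow> 'a \<Rightarrow> 'a) \<Rightarrow> 'a \<Rightarrow> 'g set" where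
  "stab G phi u = {g \<in> carrier G. phi g u = u}"

definition primitive_on :: "('g \<Rightarrow> 'a \<Rightarrow> 'a) \<Rightarrow> 'g set \<Rightarrow> 'a set \<Rightarrow> bool" where
  "primitive_on phi H S \<longleftrightarrow> transitive_on phi H S \<and>
     (\<forall>B. B \<subseteq> S \<longrightarrow> (\<forall>h\<in>H. phi h ` B = B \<or> phi h ` B \<inter> B = {}) \<longrightarrow>
          card B \<le> 1 \<or> B = S)"

definition aut_action :: "('g, 'b) monoid_scheme \<Rightarrow> ('g \<Rightarrow> 'a \<Rightarrow> 'a) \<Rightarrow> 'a set \<Rightarrow> ('a \<Rightarrow> 'a \<Rightarrow> bool) \<Rightarrow> bool" where
  "aut_action G phi V E \<longleftrightarrow> group_action G V phi \<and> inj_on phi (carrier G) \<and>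
     (\<forall>g\<in>carrier G. \<forall>u\<in>V. \<forall>v\<in>V. E u v \<longleftrightarrow> E (phi g u) (phi g v))"

definition distance_transitive :: "('g, 'b) monoid_scheme \<Rightarrow> ('g \<Rightarrow> 'a \<Rightarrow> 'a) \<Rightarrow> 'a set \<Rightarrow> ('a \<Rightarrow> 'a \<Rightarrow> bool) \<Rightarrow> nat \<Rightarrow> bool" where
  "distance_transitive G phi V E s \<longleftrightarrow> aut_action G phi V E \<and> s \<le> diam V E \<and>
     transitive_on phi (carrier G) V \<and>
     (\<forall>u\<in>V. \<forall>i\<le>s. transitive_on phi (stab G phi u) (sphere V E u i))"

definition arc_transitive :: "('g, 'b) monoid_scheme \<Rightarrow> ('g \<Rightarrow> 'a \<Rightarrow> 'a) \<Rightarrow> 'a set \<Rightarrow> ('a \<Rightarrow> 'a \<Rightarrow> bool) \<Rightarrow> bool" where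
  "arc_transitive G phi V E \<longleftrightarrow> aut_action G phi V E \<and>
     (\<forall>u v x y. E u v \<longrightarrow> E x y \<longrightarrow> (\<exists>g\<in>carrier G. phi g u = x \<and> phi g v = y))"

definition locally_primitive :: "('g, 'b) monoid_scheme \<Rightarrow> ('g \<Rightarrow> 'a \<Rightarrow> 'a) \<Rightarrow> 'a set \<Rightarrow> ('a \<Rightarrow> 'a \<Rightarrow> bool) \<Rightarrow> bool" where
  "locally_primitive G phi V E \<longleftrightarrow> aut_action G phi V E \<and>
     (\<forall>u\<in>V. primitive_on phi (stab G phi u) (nbhd V E u))"

definition semiregular :: "('g, 'b) monoid_scheme \<Rightarrow> ('g \<Rightarrow> 'a \<Rightarrow> 'a) \<Rightarrow> 'g set \<Rightarrow> 'a set \<Rightarrow> bool" where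
  "semiregular G phi N V \<longleftrightarrow> (\<forall>v\<in>V. \<forall>n\<in>N. phi n v = v \<longrightarrow> n = one G)"

definition quasiprimitive :: "('g, 'b) monoid_scheme \<Rightarrow> ('g \<Rightarrow> 'a \<Rightarrow> 'a) \<Rightarrow> 'a set \<Rightarrow> bool" where
  "quasiprimitive G phi S \<longleftrightarrow> transitive_on phi (carrier G) S \<and>
     (\<forall>M. normal M G \<longrightarrow> M \<noteq> {one G} \<longrightarrow> transitive_on phi M S)"

definition biquasiprimitive :: "('g, 'b) monoid_scheme \<Rightarrow> ('g \<Rightarrow> 'a \<Rightarrow> 'a) \<Rightarrow> 'a set \<Rightarrow> bool" where
  "biquasiprimitive G phi S \<longleftrightarrow> transitive_on phi (carrier G) S \<and>
     (\<forall>M. normal M G \<longrightarrow> M \<noteq> {one G} \<longrightarrow> card (orbits_of phi M S) \<le> 2) \<and>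
     (\<exists>M. normal M G \<and> M \<noteq> {one G} \<and> card (orbits_of phi M S) = 2)"

text \<open>Vertices of Gamma_N are the N-orbits; distinct orbits are adjacent iff some of their
  vertices are adjacent.\<close>
definition quot_adj :: "'a set set \<Rightarrow> ('a \<Rightarrow> 'a \<Rightarrow> bool) \<Rightarrow> 'a set \<Rightarrow> 'a set \<Rightarrow> bool" where
  "quot_adj P E B B' \<longleftrightarrow> B \<in> P \<and> B' \<in> P \<and> B \<noteq> B' \<and> (\<exists>x\<in>B. \<exists>y\<in>B'. E x y)"

definition quot_act :: "('g \<Rightarrow> 'a \<Rightarrow> 'a) \<Rightarrow> 'g set \<Rightarrow> 'a set \<Rightarrow> 'g set \<Rightarrow> 'a set \<Rightarrow> 'a set" where
  "quot_act phi N V C = (\<lambda>B \<in> orbits_of phi N V. \<Union>g\<in>C. phi g ` B)"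

definition is_cover :: "'a set \<Rightarrow> ('a \<Rightarrow> 'a \<Rightarrow> bool) \<Rightarrow> 'a set set \<Rightarrow> bool" where
  "is_cover V E P \<longleftrightarrow> (\<forall>B\<in>P. \<forall>B'\<in>P. quot_adj P E B B' \<longrightarrow> (\<forall>x\<in>B. \<exists>!y. y \<in> B' \<and> E x y))"

end

theory Submission
  imports Defs
begin

text \<open>
  Since \<open>G\<close> is arc-transitive and \<open>N\<close> has at least two orbits, connectivity forces every
  \<open>N\<close>-orbit to be an independent set. If a vertex had two neighbours \<open>y \<noteq> y'\<close> in one
  \<open>N\<close>-orbit, then \<open>y'\<close> would lie at distance 2 from \<open>y\<close> inside the orbit of \<open>y\<close>, and by
  2-distance transitivity every pair of vertices at distance 2 would lie in a common \<open>N\<close>-orbit.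
  As every vertex has neighbours in at least two orbits (otherwise two orbits would be closed under
  adjacency), this forces diameter 2 and adjacency exactly between distinct orbits, so that
  \<open>\<Gamma>\<close> would be K_{m[b]}. Hence \<open>\<Gamma>\<close> covers \<open>\<Gamma>\<^sub>N\<close>, and in a cover an element of \<open>N\<close> fixing a
  vertex fixes its neighbours, so \<open>N\<close> is semiregular by connectivity.

  The kernel of \<open>G\<close> on the \<open>N\<close>-orbits is normal, contains \<open>N\<close> and has the same orbits, so by
  maximality it is \<open>N\<close>: thus \<open>G/N\<close> acts faithfully on \<open>\<Gamma>\<^sub>N\<close>. Arcs and pairs at distance 2 of
  \<open>\<Gamma>\<^sub>N\<close> lift to \<open>\<Gamma>\<close>, and blocks of \<open>(G/N)\<^sub>B\<close> on \<open>\<Gamma>\<^sub>N(B)\<close> pull back to blocks of \<open>G\<^sub>u\<close> on \<open>\<Gamma>(u)\<close>,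
  so arc transitivity, 2-distance transitivity and local primitivity descend. A nontrivial normal
  subgroup of \<open>G/N\<close> has a preimage properly containing \<open>N\<close>, which by maximality has at most two
  orbits; this gives (bi-)quasiprimitivity. Finally, all \<open>N\<close>-orbits have the same size, so
  \<open>|V\<Gamma>\<^sub>N|\<close> divides \<open>|V\<Gamma>|\<close>.
\<close>

section \<open>Walks, distances and spheres\<close>

lemma walk_0_iff: "walk E u v 0 \<longleftrightarrow> u = v"
  by (subst walk.simps) auto

lemma walk_Suc_iff: "walk E u v (Suc n) \<longleftrightarrow> (\<exists>w. E u w \<and> walk E w v n)"
  by (subst walk.simps) auto

lemma walk_1_iff: "walk E u v (Suc 0) \<longleftrightarrow> E u v"
  by (simp add: walk_Suc_iff walk_0_iff)

lemma walk_2_iff: "walk E u v 2 \<longleftrightarrow> (\<exists>w. E u w \<and> E w v)"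
  by (simp add: numeral_2_eq_2 walk_Suc_iff walk_0_iff)

lemma walk_closed_set:
  assumes "walk E x v n" "x \<in> S" "\<And>a b. a \<in> S \<Longrightarrow> E a b \<Longrightarrow> b \<in> S"
  shows "v \<in> S"
  using assms by (induction rule: walk.induct) auto

lemma connected_graph_closed_set:
  assumes "connected_graph V E" "x \<in> V" "v \<in> V" "x \<in> S"
    and "\<And>a b. a \<in> S \<Longrightarrow> E a b \<Longrightarrow> b \<in> S"
  shows "v \<in> S"
proof -
  obtain n where "walk E x v n"
    using assms(1-3) by (auto simp: connected_graph_def)
  then show ?thesis
    using assms(4,5) by (rule walk_closed_set)
qed

lemma sphere_eq: "sphere V E u i = {v \<in> V. walk E u v i \<and> (\<forall>j<i. \<not> walk E u v j)}"
proof -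
  have "((\<exists>n. walk E u v n) \<and> gdist E u v = i) \<longleftrightarrow> walk E u v i \<and> (\<forall>j<i. \<not> walk E u v j)"
    for v
    unfolding gdist_def
    by (metis LeastI_ex Least_equality not_less not_less_Least)
  then show ?thesis
    unfolding sphere_def by blast
qed

definition at_dist2 :: "('a \<Rightarrow> 'a \<Rightarrow> bool) \<Rightarrow> 'a \<Rightarrow> 'a \<Rightarrow> bool" where
  "at_dist2 E u v \<longleftrightarrow> v \<noteq> u \<and> \<not> E u v \<and> (\<exists>w. E u w \<and> E w v)"

lemma sphere_0: "u \<in> V \<Longrightarrow> sphere V E u 0 = {u}"
  by (auto simp: sphere_eq walk_0_iff)

lemma sphere_1: "\<not> E u u \<Longrightarrow> sphere V E u 1 = nbhd V E u"
  by (auto simp: sphere_eq nbhd_def walk_0_iff walk_1_iff)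

lemma sphere_2:
  assumes "\<not> E u u"
  shows "sphere V E u 2 = {v \<in> V. at_dist2 E u v}"
proof -
  have "(\<forall>j<2. \<not> walk E u v j) \<longleftrightarrow> v \<noteq> u \<and> \<not> E u v" for v
    using walk_0_iff[of E u v] walk_1_iff[of E u v] by (auto simp: less_2_cases_iff)
  then show ?thesis
    using assms by (auto simp: sphere_eq walk_2_iff at_dist2_def)
qed

lemma gdist_ge_2:
  assumes "walk E u v n" "u \<noteq> v" "\<not> E u v"
  shows "2 \<le> gdist E u v"
proof -
  have "walk E u v (gdist E u v)"
    unfolding gdist_def using assms(1) by (rule LeastI)
  then show ?thesis
    using assms(2,3) walk_0_iff[of E u v] walk_1_iff[of E u v] by (metis less_2_cases not_le)
qed

lemma gdist_le_diam:
  assumes "finite V" "u \<in> V" "v \<in> V"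
  shows "gdist E u v \<le> diam V E"
proof -
  have "{gdist E u v | u v. u \<in> V \<and> v \<in> V} = (\<lambda>(u, v). gdist E u v) ` (V \<times> V)"
    by auto
  then show ?thesis
    unfolding diam_def using assms by (auto intro: Max_ge)
qed

section \<open>Orbits of a normal subgroup and the action of the quotient group on them\<close>

lemma transitive_on_if_card_orbits_le_1:
  assumes "card (orbits_of phi H S) \<le> 1" "finite S" "\<And>x. x \<in> S \<Longrightarrow> x \<in> orbit_of phi H x"
  shows "transitive_on phi H S"
  unfolding transitive_on_def
proof (intro ballI)
  fix x y assume "x \<in> S" "y \<in> S"
  then have "orbit_of phi H x \<in> orbits_of phi H S" "orbit_of phi H y \<in> orbits_of phi H S"
    by (simp_all add: orbits_of_def)
  moreover have "finite (orbits_of phi H S)"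
    using assms(2) by (simp add: orbits_of_def)
  ultimately have "orbit_of phi H x = orbit_of phi H y"
    using assms(1) card_le_Suc0_iff_eq by (metis One_nat_def)
  then have "y \<in> orbit_of phi H x"
    using assms(3)[OF \<open>y \<in> S\<close>] by simp
  then show "\<exists>h\<in>H. phi h x = y"
    unfolding orbit_of_def by blast
qed

lemma (in group_action) act_closed: "g \<in> carrier G \<Longrightarrow> v \<in> E \<Longrightarrow> \<phi> g v \<in> E"
  using element_image by blast

lemma (in group_action) act_mult:
  "g \<in> carrier G \<Longrightarrow> h \<in> carrier G \<Longrightarrow> v \<in> E \<Longrightarrow> \<phi> (g \<otimes> h) v = \<phi> g (\<phi> h v)"
  using composition_rule by blast

lemma (in group_action) act_one: "v \<in> E \<Longrightarrow> \<phi> \<one> v = v"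
  by (metis id_eq_one restrict_apply')

lemma (in group_action) act_inv_act: "g \<in> carrier G \<Longrightarrow> v \<in> E \<Longrightarrow> \<phi> (inv g) (\<phi> g v) = v"
  using orbit_sym_aux by blast

lemma (in group_action) act_act_inv:
  assumes "g \<in> carrier G" "v \<in> E"
  shows "\<phi> g (\<phi> (inv g) v) = v"
proof -
  interpret group G
    using group_hom group_hom.axioms(1) by blast
  show ?thesis
    using act_inv_act[of "inv g" v] assms by simp
qed

lemma (in group_action) act_image_act_inv: "g \<in> carrier G \<Longrightarrow> S \<subseteq> E \<Longrightarrow> \<phi> g ` \<phi> (inv g) ` S = S"
  by (force simp: image_image act_act_inv intro: image_eqI)

lemma (in group_action) act_inv_image_act: "g \<in> carrier G \<Longrightarrow> S \<subseteq> E \<Longrightarrow> \<phi> (inv g) ` \<phi> g ` S = S"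
  by (force simp: image_image act_inv_act intro: image_eqI)

locale orbit_quotient = group_action G V phi + normal N G
  for G :: "('g, 'b) monoid_scheme" (structure) and V :: "'a set" and phi N
begin

abbreviation Norb :: "'a \<Rightarrow> 'a set" where "Norb \<equiv> orbit_of phi N"
abbreviation Norbs :: "'a set set" where "Norbs \<equiv> orbits_of phi N V"
abbreviation qact :: "'g set \<Rightarrow> 'a set \<Rightarrow> 'a set" where "qact \<equiv> quot_act phi N V"

sublocale Nact: group_action "G\<lparr>carrier := N\<rparr>" V phi
  by (rule induced_action[OF is_subgroup])

lemma Norb_eq_orbit: "Norb v = orbit (G\<lparr>carrier := N\<rparr>) phi v"
  unfolding orbit_of_def orbit_def by auto

lemma Norb_memI: "n \<in> N \<Longrightarrow> phi n v \<in> Norb v"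
  unfolding orbit_of_def by blast

lemma Norb_refl: "v \<in> V \<Longrightarrow> v \<in> Norb v"
  using Nact.orbit_refl by (simp add: Norb_eq_orbit)

lemma Norb_subset: "v \<in> V \<Longrightarrow> Norb v \<subseteq> V"
  unfolding orbit_of_def using subset by (blast intro: act_closed)

lemma Norb_eq: assumes "v \<in> V" "w \<in> Norb v" shows "Norb w = Norb v"
proof -
  have "w \<in> V"
    using assms Norb_subset by blast
  then show ?thesis
    using assms Nact.orbit_sym Nact.orbit_trans Norb_subset unfolding Norb_eq_orbit by blast
qed

lemma Norb_eq_iff: "v \<in> V \<Longrightarrow> w \<in> V \<Longrightarrow> Norb v = Norb w \<longleftrightarrow> w \<in> Norb v"
  using Norb_eq Norb_refl by metis

lemma Norbs_memI: "v \<in> V \<Longrightarrow> Norb v \<in> Norbs"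
  unfolding orbits_of_def by (rule imageI)

lemma Norbs_memE:
  assumes "B \<in> Norbs"
  obtains v where "v \<in> V" "B = Norb v"
  using assms unfolding orbits_of_def by blast

lemma Norbs_subset: "B \<in> Norbs \<Longrightarrow> B \<subseteq> V"
  by (metis Norbs_memE Norb_subset)

lemma Norbs_eq_Norb: "B \<in> Norbs \<Longrightarrow> y \<in> B \<Longrightarrow> B = Norb y"
  by (metis Norbs_memE Norb_eq)

lemma Union_Norbs: "\<Union>Norbs = V"
  using Norb_subset Norb_refl unfolding orbits_of_def by blast

lemma Norbs_disjoint: "B \<in> Norbs \<Longrightarrow> B' \<in> Norbs \<Longrightarrow> B \<noteq> B' \<Longrightarrow> B \<inter> B' = {}"
  using Norbs_eq_Norb by blast

lemma conj_act:
  assumes "g \<in> carrier G" "n \<in> N" "v \<in> V"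
  shows "phi g (phi n v) = phi (g \<otimes> n \<otimes> inv g) (phi g v)"
proof -
  have n: "n \<in> carrier G"
    using assms(2) subset by blast
  have "phi (g \<otimes> n \<otimes> inv g) (phi g v) = phi (g \<otimes> n) (phi (inv g) (phi g v))"
    using assms n by (simp add: act_mult act_closed)
  also have "\<dots> = phi g (phi n v)"
    using assms n by (simp add: act_mult act_inv_act)
  finally show ?thesis by simp
qed

lemma Norb_image:
  assumes "g \<in> carrier G" "v \<in> V"
  shows "phi g ` Norb v = Norb (phi g v)"
proof -
  have sub: "phi h ` Norb w \<subseteq> Norb (phi h w)" if "h \<in> carrier G" "w \<in> V" for h w
    using that conj_act inv_op_closed2 unfolding orbit_of_def by fastforce
  have "Norb (phi g v) = phi g ` phi (inv g) ` Norb (phi g v)"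
    using assms Norb_subset act_closed act_image_act_inv by simp
  also have "\<dots> \<subseteq> phi g ` Norb v"
    using sub[of "inv g" "phi g v"] assms act_closed act_inv_act by (simp add: image_mono)
  finally show ?thesis
    using sub assms by blast
qed

lemma Norb_act: "g \<in> carrier G \<Longrightarrow> v \<in> V \<Longrightarrow> w \<in> Norb v \<Longrightarrow> phi g w \<in> Norb (phi g v)"
  using Norb_image by blast

lemma Norb_act_eq_iff:
  assumes "g \<in> carrier G" "v \<in> V" "w \<in> V"
  shows "Norb (phi g v) = Norb (phi g w) \<longleftrightarrow> Norb v = Norb w"
proof
  assume "Norb (phi g v) = Norb (phi g w)"
  then have "phi (inv g) ` Norb (phi g v) = phi (inv g) ` Norb (phi g w)"
    by simp
  then show "Norb v = Norb w"
    using assms Norb_image[of "inv g"] act_closed act_inv_act by simp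
qed (metis assms Norb_image)

lemma card_Norb_act: "g \<in> carrier G \<Longrightarrow> v \<in> V \<Longrightarrow> card (Norb (phi g v)) = card (Norb v)"
  using Norb_image card_image inj_on_subset[OF inj_prop Norb_subset] by metis

lemma r_coset_memE:
  assumes "h \<in> N #> g"
  obtains n where "n \<in> N" "h = n \<otimes> g"
  using assms unfolding r_coset_def by auto

lemma qact_coset_Norb:
  assumes "g \<in> carrier G" "v \<in> V"
  shows "qact (N #> g) (Norb v) = Norb (phi g v)"
proof -
  have "phi h ` Norb v = Norb (phi g v)" if "h \<in> N #> g" for h
  proof -
    from that obtain n where n: "n \<in> N" "h = n \<otimes> g"
      by (rule r_coset_memE)
    have nG: "n \<in> carrier G"
      using n(1) subset by blast
    have "phi h ` Norb v = Norb (phi n (phi g v))"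
      using Norb_image[of h v] assms nG n(2) by (simp add: act_mult)
    also have "\<dots> = Norb (phi g v)"
      using Norb_eq[OF act_closed[OF assms] Norb_memI[OF n(1)]] .
    finally show ?thesis .
  qed
  moreover have "g \<in> N #> g"
    using assms(1) rcos_self is_subgroup by blast
  moreover have "qact (N #> g) (Norb v) = (\<Union>h\<in>N #> g. phi h ` Norb v)"
    unfolding quot_act_def using Norbs_memI[OF assms(2)] by simp
  ultimately show ?thesis
    by blast
qed

lemma qact_coset: "g \<in> carrier G \<Longrightarrow> B \<in> Norbs \<Longrightarrow> qact (N #> g) B = phi g ` B"
  by (metis Norbs_memE qact_coset_Norb Norb_image)

lemma image_Norbs: "g \<in> carrier G \<Longrightarrow> B \<in> Norbs \<Longrightarrow> phi g ` B \<in> Norbs"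
  by (metis Norbs_memE Norb_image act_closed Norbs_memI)

lemma qact_closed: "g \<in> carrier G \<Longrightarrow> B \<in> Norbs \<Longrightarrow> qact (N #> g) B \<in> Norbs"
  by (simp add: qact_coset image_Norbs)

lemma qact_Bij:
  assumes "g \<in> carrier G"
  shows "qact (N #> g) \<in> Bij Norbs"
proof -
  have inv: "qact (N #> inv h) (qact (N #> h) B) = B" if "h \<in> carrier G" "B \<in> Norbs" for h B
    using that qact_coset qact_closed Norbs_subset act_inv_image_act by simp
  have "bij_betw (qact (N #> g)) Norbs Norbs"
    by (rule bij_betw_byWitness[where f'="qact (N #> inv g)"])
      (use assms inv[of g] inv[of "inv g"] qact_closed in auto)
  then show ?thesis
    unfolding Bij_def quot_act_def by simp
qed

lemma qact_coset_mult:
  assumes "g \<in> carrier G" "h \<in> carrier G"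
  shows "qact (N #> (g \<otimes> h)) = compose Norbs (qact (N #> g)) (qact (N #> h))"
proof
  fix B
  show "qact (N #> (g \<otimes> h)) B = compose Norbs (qact (N #> g)) (qact (N #> h)) B"
  proof (cases "B \<in> Norbs")
    case True
    then have "phi (g \<otimes> h) ` B = phi g ` phi h ` B"
      using assms Norbs_subset by (force simp: act_mult)
    then show ?thesis
      using True assms by (simp add: compose_def qact_coset image_Norbs)
  qed (simp add: compose_def quot_act_def)
qed

lemma quot_action: "group_action (G Mod N) Norbs qact"
  unfolding group_action_def group_hom_def group_hom_axioms_def
proof (intro conjI factorgroup_is_group group_BijGroup homI)
  fix C assume "C \<in> carrier (G Mod N)"
  then obtain g where "g \<in> carrier G" "C = N #> g"
    unfolding carrier_FactGroup by blast
  then show "qact C \<in> carrier (BijGroup Norbs)"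
    using qact_Bij by (simp add: BijGroup_def)
next
  fix C D assume "C \<in> carrier (G Mod N)" "D \<in> carrier (G Mod N)"
  then obtain g h where "g \<in> carrier G" "C = N #> g" "h \<in> carrier G" "D = N #> h"
    unfolding carrier_FactGroup by blast
  then show "qact (C \<otimes>\<^bsub>G Mod N\<^esub> D) = qact C \<otimes>\<^bsub>BijGroup Norbs\<^esub> qact D"
    by (simp add: rcos_sum BijGroup_def qact_Bij qact_coset_mult)
qed

lemma common_Norbs_iff: "u \<in> V \<Longrightarrow> w \<in> V \<Longrightarrow> (\<exists>B\<in>Norbs. u \<in> B \<and> w \<in> B) \<longleftrightarrow> Norb u = Norb w"
  using Norbs_eq_Norb Norbs_memI Norb_refl by metis

lemma qact_N: "B \<in> Norbs \<Longrightarrow> qact N B = B"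
  using qact_coset[of \<one> B] Norbs_subset by (force simp: act_one coset_mult_one[OF subset])

lemma N_mem_stab: "B \<in> Norbs \<Longrightarrow> N \<in> stab (G Mod N) qact B"
  unfolding stab_def using qact_N by (simp add: carrier_FactGroup image_iff) (metis coset_mult_one[OF subset] one_closed)

lemma coset_mem_stab: "g \<in> carrier G \<Longrightarrow> u \<in> V \<Longrightarrow> phi g u = u \<Longrightarrow> N #> g \<in> stab (G Mod N) qact (Norb u)"
  unfolding stab_def carrier_FactGroup by (simp add: qact_coset_Norb)

lemma quot_transitive:
  assumes "transitive_on phi (carrier G) V"
  shows "transitive_on qact (carrier (G Mod N)) Norbs"
  unfolding transitive_on_def
proof (intro ballI)
  fix B1 B2 assume "B1 \<in> Norbs" "B2 \<in> Norbs"
  then obtain x y where "x \<in> V" "B1 = Norb x" "y \<in> V" "B2 = Norb y"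
    by (metis Norbs_memE)
  moreover obtain g where "g \<in> carrier G" "phi g x = y"
    using assms calculation unfolding transitive_on_def by blast
  ultimately show "\<exists>C\<in>carrier (G Mod N). qact C B1 = B2"
    unfolding carrier_FactGroup by (auto simp: qact_coset_Norb)
qed

lemma card_Norb_eq:
  assumes "transitive_on phi (carrier G) V" "v \<in> V" "w \<in> V"
  shows "card (Norb v) = card (Norb w)"
  using assms card_Norb_act unfolding transitive_on_def by metis

lemma card_eq_card_Norb_mult:
  assumes "transitive_on phi (carrier G) V" "finite V" "v \<in> V"
  shows "card V = card (Norb v) * card Norbs"
proof -
  have "card (Norb v) * card Norbs = card (\<Union>Norbs)"
  proof (rule card_partition)
    show "finite Norbs"
      using assms(2) by (simp add: orbits_of_def)
    show "finite (\<Union>Norbs)"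
      using assms(2) by (simp add: Union_Norbs)
    show "card B = card (Norb v)" if "B \<in> Norbs" for B
      using assms card_Norb_eq that by (metis Norbs_memE)
    show "B1 \<inter> B2 = {}" if "B1 \<in> Norbs" "B2 \<in> Norbs" "B1 \<noteq> B2" for B1 B2
      using Norbs_disjoint that by blast
  qed
  then show ?thesis
    by (simp add: Union_Norbs)
qed

lemma odd_card_Norbs:
  assumes "transitive_on phi (carrier G) V" "finite V" "odd (card V)"
  shows "odd (card Norbs)"
proof -
  obtain v where "v \<in> V"
    using assms(3) by fastforce
  then show ?thesis
    using card_eq_card_Norb_mult[OF assms(1,2)] assms(3) by simp
qed

lemma orbit_qact:
  assumes "subgroup M (G Mod N)" "v \<in> V"
  shows "orbit_of qact M (Norb v) = Norb ` orbit_of phi (\<Union>M) v"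
proof -
  have M: "C \<in> M \<Longrightarrow> \<exists>g\<in>carrier G. C = N #> g" for C
    using subgroup.subset[OF assms(1)] unfolding carrier_FactGroup by blast
  have qact_eq: "qact C (Norb v) = Norb (phi h v)" if C: "C \<in> M" and h: "h \<in> C" for C h
  proof -
    obtain g where g: "g \<in> carrier G" "C = N #> g"
      using M C by blast
    have hC: "h \<in> N #> g"
      using h g(2) by simp
    then obtain n where "n \<in> N" "h = n \<otimes> g"
      by (rule r_coset_memE)
    then have "h \<in> carrier G"
      using g(1) subset by blast
    moreover have "C = N #> h"
      using repr_independence[OF hC g(1) is_subgroup] g(2) by simp
    ultimately show ?thesis
      using qact_coset_Norb assms(2) by simp
  qed
  show ?thesis
    unfolding orbit_of_def[of qact M] orbit_of_def[of phi "\<Union>M"] image_image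
  proof (intro equalityI subsetI)
    fix B assume "B \<in> (\<lambda>C. qact C (Norb v)) ` M"
    then obtain C where C: "C \<in> M" "B = qact C (Norb v)"
      by blast
    then obtain g where "g \<in> carrier G" "C = N #> g"
      using M by blast
    then have "g \<in> C"
      using rcos_self[OF _ is_subgroup] by simp
    then show "B \<in> (\<lambda>h. Norb (phi h v)) ` \<Union>M"
      using C qact_eq by blast
  next
    fix B assume "B \<in> (\<lambda>h. Norb (phi h v)) ` \<Union>M"
    then obtain C h where "C \<in> M" "h \<in> C" "B = Norb (phi h v)"
      by blast
    then show "B \<in> (\<lambda>C. qact C (Norb v)) ` M"
      using qact_eq by (metis image_eqI)
  qed
qed

lemma card_orbits_qact_le:
  assumes "subgroup M (G Mod N)" "finite V"
  shows "card (orbits_of qact M Norbs) \<le> card (orbits_of phi (\<Union>M) V)"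
proof -
  have "orbits_of qact M Norbs = (\<lambda>v. orbit_of qact M (Norb v)) ` V"
    unfolding orbits_of_def by (simp add: image_image)
  also have "\<dots> = (\<lambda>S. Norb ` S) ` orbits_of phi (\<Union>M) V"
    unfolding orbits_of_def using orbit_qact[OF assms(1)] by (simp add: image_image)
  finally show ?thesis
    using assms(2) by (simp add: card_image_le orbits_of_def)
qed

lemma qact_orbit_refl: "subgroup M (G Mod N) \<Longrightarrow> B \<in> Norbs \<Longrightarrow> B \<in> orbit_of qact M B"
  unfolding orbit_of_def using subgroup.one_closed qact_N by force

definition orbits_kernel :: "'g set" where
  "orbits_kernel = kernel G (BijGroup Norbs) (\<lambda>g. qact (N #> g))"

lemma orbits_kernel_normal: "orbits_kernel \<lhd> G"
proof -
  have "(\<lambda>g. qact (N #> g)) \<in> hom G (BijGroup Norbs)"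
    using Group.hom_compose[OF r_coset_hom_Mod group_hom.homh[OF group_action.group_hom[OF quot_action]]]
    by (simp add: comp_def)
  then have "group_hom G (BijGroup Norbs) (\<lambda>g. qact (N #> g))"
    by (simp add: group_hom_def group_hom_axioms_def is_group group_BijGroup)
  then show ?thesis
    unfolding orbits_kernel_def by (rule group_hom.normal_kernel)
qed

lemma orbits_kernel_iff: "g \<in> orbits_kernel \<longleftrightarrow> g \<in> carrier G \<and> (\<forall>v\<in>V. phi g v \<in> Norb v)"
proof (cases "g \<in> carrier G")
  case True
  have "qact (N #> g) = (\<lambda>B\<in>Norbs. B) \<longleftrightarrow> (\<forall>B\<in>Norbs. qact (N #> g) B = B)"
    by (auto simp: quot_act_def fun_eq_iff)
  also have "\<dots> \<longleftrightarrow> (\<forall>v\<in>V. Norb (phi g v) = Norb v)"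
    unfolding orbits_of_def using True by (simp add: qact_coset_Norb)
  also have "\<dots> \<longleftrightarrow> (\<forall>v\<in>V. phi g v \<in> Norb v)"
    by (rule ball_cong[OF refl]) (metis Norb_eq_iff act_closed[OF True])
  finally show ?thesis
    unfolding orbits_kernel_def kernel_def using True by (simp add: BijGroup_def)
qed (simp add: orbits_kernel_def kernel_def)

lemma N_subset_orbits_kernel: "N \<subseteq> orbits_kernel"
  using subset by (auto simp: orbits_kernel_iff Norb_memI)

lemma orbits_of_orbits_kernel: "orbits_of phi orbits_kernel V = Norbs"
proof -
  have "orbit_of phi orbits_kernel v \<subseteq> Norb v" if "v \<in> V" for v
    using that unfolding orbit_of_def[of phi orbits_kernel] by (auto simp: orbits_kernel_iff)
  moreover have "Norb v \<subseteq> orbit_of phi orbits_kernel v" for v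
    unfolding orbit_of_def by (rule image_mono[OF N_subset_orbits_kernel])
  ultimately have "orbit_of phi orbits_kernel v = Norb v" if "v \<in> V" for v
    using that by blast
  then show ?thesis
    unfolding orbits_of_def by simp
qed

lemma qact_faithful:
  assumes "orbits_kernel \<subseteq> N"
  shows "inj_on qact (carrier (G Mod N))"
proof -
  interpret Q: group_hom "G Mod N" "BijGroup Norbs" qact
    using quot_action by (rule group_action.group_hom)
  have "kernel (G Mod N) (BijGroup Norbs) qact \<subseteq> {N}"
  proof
    fix C assume C: "C \<in> kernel (G Mod N) (BijGroup Norbs) qact"
    then obtain g where "g \<in> carrier G" "C = N #> g"
      unfolding kernel_def carrier_FactGroup by blast
    moreover have "g \<in> N"
      using assms C calculation unfolding orbits_kernel_def kernel_def by auto
    ultimately show "C \<in> {N}"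
      using coset_join2[OF _ is_subgroup] by simp
  qed
  moreover have "N \<in> kernel (G Mod N) (BijGroup Norbs) qact"
    using subgroup.one_closed[OF Q.subgroup_kernel] by simp
  ultimately show ?thesis
    using Q.trivial_ker_imp_inj by (metis one_FactGroup subset_singletonD empty_iff)
qed

end

section \<open>Normal quotient graphs\<close>

locale graph_orbit_quotient = orbit_quotient G V phi N
  for G :: "('g, 'b) monoid_scheme" (structure) and V :: "'a set" and phi N +
  fixes E :: "'a \<Rightarrow> 'a \<Rightarrow> bool"
  assumes sgraph: "sgraph V E"
    and adj_act_iff: "g \<in> carrier G \<Longrightarrow> u \<in> V \<Longrightarrow> v \<in> V \<Longrightarrow> E (phi g u) (phi g v) \<longleftrightarrow> E u v"
begin

abbreviation qadj :: "'a set \<Rightarrow> 'a set \<Rightarrow> bool" where "qadj \<equiv> quot_adj Norbs E"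

lemma adj_in_V: "E u v \<Longrightarrow> u \<in> V" "E u v \<Longrightarrow> v \<in> V"
  using sgraph by (simp_all add: sgraph_def)

lemma adj_sym: "E u v \<Longrightarrow> E v u"
  using sgraph by (simp add: sgraph_def)

lemma adj_irrefl: "\<not> E u u"
  using sgraph by (simp add: sgraph_def)

lemma adj_act: "g \<in> carrier G \<Longrightarrow> E u v \<Longrightarrow> E (phi g u) (phi g v)"
  using adj_act_iff adj_in_V by blast

lemma at_dist2_act:
  assumes "g \<in> carrier G" "u \<in> V" "at_dist2 E u v"
  shows "at_dist2 E (phi g u) (phi g v)"
proof -
  obtain w where w: "E u w" "E w v" "v \<noteq> u" "\<not> E u v"
    using assms(3) unfolding at_dist2_def by blast
  then have "v \<in> V"
    by (simp add: adj_in_V)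
  then have "phi g v \<noteq> phi g u" "\<not> E (phi g u) (phi g v)"
    using w(3,4) assms(1,2) adj_act_iff inj_on_eq_iff[OF inj_prop[OF assms(1)]] by auto
  then show ?thesis
    unfolding at_dist2_def using adj_act[OF assms(1) w(1)] adj_act[OF assms(1) w(2)] by blast
qed

lemma qadj_Norbs: "qadj B B' \<Longrightarrow> B \<in> Norbs" "qadj B B' \<Longrightarrow> B' \<in> Norbs"
  unfolding quot_adj_def by simp_all

lemma qadj_irrefl: "\<not> qadj B B"
  unfolding quot_adj_def by simp

lemma qadj_NorbI: "E x y \<Longrightarrow> Norb x \<noteq> Norb y \<Longrightarrow> qadj (Norb x) (Norb y)"
  unfolding quot_adj_def using adj_in_V Norbs_memI Norb_refl by blast

lemma adj_lift_Norb:
  assumes "x \<in> V" "p \<in> Norb x" "E x y"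
  shows "\<exists>y'\<in>Norb y. E p y'"
proof -
  obtain n where n: "n \<in> N" "p = phi n x"
    using assms(2) unfolding orbit_of_def by blast
  then have "E p (phi n y)"
    using adj_act[OF _ assms(3)] subset by blast
  then show ?thesis
    using Norb_memI[OF n(1)] by blast
qed

lemma qadj_lift:
  assumes "x \<in> V" "qadj (Norb x) B"
  obtains y where "y \<in> B" "E x y" "B = Norb y"
proof -
  obtain x0 y0 where x0: "x0 \<in> Norb x" and y0: "y0 \<in> B" and e: "E x0 y0" and B: "B \<in> Norbs"
    using assms(2) unfolding quot_adj_def by blast
  have "x \<in> Norb x0"
    using Norb_eq[OF assms(1) x0] Norb_refl[OF assms(1)] by simp
  then obtain y where "y \<in> Norb y0" "E x y"
    using adj_lift_Norb[OF adj_in_V(1)[OF e] _ e] by blast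
  moreover have "Norb y0 = B"
    using Norbs_eq_Norb[OF B y0] by simp
  ultimately show ?thesis
    using that Norbs_eq_Norb[OF B] by blast
qed

lemma qadj_qact_iff:
  assumes "g \<in> carrier G" "B \<in> Norbs" "B' \<in> Norbs"
  shows "qadj (qact (N #> g) B) (qact (N #> g) B') \<longleftrightarrow> qadj B B'"
proof -
  have pres: "qadj (phi h ` B) (phi h ` B')" if "h \<in> carrier G" "qadj B B'" for h B B'
  proof -
    obtain x y where "x \<in> B" "y \<in> B'" "E x y" "B \<in> Norbs" "B' \<in> Norbs" "B \<noteq> B'"
      using \<open>qadj B B'\<close> unfolding quot_adj_def by blast
    moreover have "phi h ` B \<noteq> phi h ` B'"
      using calculation Norbs_subset inj_on_image_eq_iff[OF inj_prop[OF that(1)]] by metis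
    ultimately show ?thesis
      unfolding quot_adj_def using that(1) image_Norbs adj_act by blast
  qed
  show ?thesis
    using pres[of g B B'] pres[of "inv g" "phi g ` B" "phi g ` B'"] assms
    by (auto simp: qact_coset act_inv_image_act Norbs_subset)
qed

lemma quot_aut_action:
  assumes "inj_on qact (carrier (G Mod N))"
  shows "aut_action (G Mod N) qact Norbs qadj"
  unfolding aut_action_def
proof (intro conjI ballI quot_action assms)
  fix C B B' assume "C \<in> carrier (G Mod N)" "B \<in> Norbs" "B' \<in> Norbs"
  then show "qadj B B' \<longleftrightarrow> qadj (qact C B) (qact C B')"
    unfolding carrier_FactGroup using qadj_qact_iff by auto
qed

lemma quot_stab_transitive:
  assumes "u \<in> V" "transitive_on phi (stab G phi u) S" "S \<subseteq> V"
    and "\<And>B. B \<in> T \<Longrightarrow> \<exists>z\<in>S. B = Norb z"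
  shows "transitive_on qact (stab (G Mod N) qact (Norb u)) T"
  unfolding transitive_on_def
proof (intro ballI)
  fix B1 B2 assume "B1 \<in> T" "B2 \<in> T"
  then obtain z1 z2 where z: "z1 \<in> S" "B1 = Norb z1" "z2 \<in> S" "B2 = Norb z2"
    using assms(4) by metis
  then obtain g where "g \<in> stab G phi u" "phi g z1 = z2"
    using assms(2) unfolding transitive_on_def by blast
  then show "\<exists>C\<in>stab (G Mod N) qact (Norb u). qact C B1 = B2"
    using z assms(1,3) coset_mem_stab qact_coset_Norb unfolding stab_def by blast
qed

lemma nbhd_qadj_subset:
  assumes "u \<in> V"
  shows "nbhd Norbs qadj (Norb u) \<subseteq> Norb ` nbhd V E u"
proof
  fix B assume "B \<in> nbhd Norbs qadj (Norb u)"
  then obtain y where "E u y" "B = Norb y"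
    using qadj_lift[OF assms] unfolding nbhd_def by blast
  then show "B \<in> Norb ` nbhd V E u"
    using adj_in_V unfolding nbhd_def by blast
qed

lemma quot_nbhd_transitive:
  assumes "u \<in> V" "transitive_on phi (stab G phi u) (nbhd V E u)"
  shows "transitive_on qact (stab (G Mod N) qact (Norb u)) (nbhd Norbs qadj (Norb u))"
proof (rule quot_stab_transitive[OF assms])
  show "nbhd V E u \<subseteq> V"
    unfolding nbhd_def by blast
  fix B assume "B \<in> nbhd Norbs qadj (Norb u)"
  then show "\<exists>z\<in>nbhd V E u. B = Norb z"
    using nbhd_qadj_subset[OF assms(1)] by blast
qed

lemma nbhd_image:
  assumes "g \<in> carrier G" "u \<in> V"
  shows "phi g ` nbhd V E u = nbhd V E (phi g u)"
proof -
  have sub: "phi h ` nbhd V E w \<subseteq> nbhd V E (phi h w)" if "h \<in> carrier G" for h w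
    using that adj_act act_closed unfolding nbhd_def by auto
  have "nbhd V E (phi g u) = phi g ` phi (inv g) ` nbhd V E (phi g u)"
    using act_image_act_inv[OF assms(1)] unfolding nbhd_def by simp
  also have "\<dots> \<subseteq> phi g ` nbhd V E u"
    using sub[of "inv g" "phi g u"] assms act_inv_act by (simp add: image_mono)
  finally show ?thesis
    using sub[OF assms(1)] by blast
qed

lemma Norb_mem_qact_image_iff:
  assumes "g \<in> carrier G" "v \<in> V" "BB \<subseteq> Norbs"
  shows "Norb (phi g v) \<in> qact (N #> g) ` BB \<longleftrightarrow> Norb v \<in> BB"
proof -
  have "phi g ` Norb v = phi g ` B \<longleftrightarrow> Norb v = B" if "B \<in> Norbs" for B
    using inj_on_image_eq_iff[OF inj_prop[OF assms(1)] Norb_subset[OF assms(2)] Norbs_subset[OF that]] .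
  then have "(\<exists>B\<in>BB. phi g ` Norb v = phi g ` B) \<longleftrightarrow> Norb v \<in> BB"
    using assms(3) by blast
  moreover have "qact (N #> g) ` BB = (\<lambda>B. phi g ` B) ` BB"
    by (rule image_cong) (use assms(1,3) qact_coset in auto)
  ultimately show ?thesis
    unfolding Norb_image[OF assms(1,2), symmetric] by (simp add: image_iff)
qed

definition nbhd_over :: "'a \<Rightarrow> 'a set set \<Rightarrow> 'a set" where
  "nbhd_over u BB = {v \<in> nbhd V E u. Norb v \<in> BB}"

lemma image_nbhd_over:
  assumes "u \<in> V" "g \<in> stab G phi u" "BB \<subseteq> Norbs"
  shows "phi g ` nbhd_over u BB = nbhd_over u (qact (N #> g) ` BB)"
proof -
  have g: "g \<in> carrier G" "phi g u = u"
    using assms(2) unfolding stab_def by simp_all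
  have X: "phi g ` nbhd V E u = nbhd V E u"
    using nbhd_image[OF g(1) assms(1)] g(2) by simp
  have iff: "Norb (phi g v) \<in> qact (N #> g) ` BB \<longleftrightarrow> Norb v \<in> BB" if "v \<in> nbhd V E u" for v
    using Norb_mem_qact_image_iff[OF g(1) _ assms(3)] that unfolding nbhd_def by simp
  show ?thesis
    unfolding nbhd_over_def
  proof (intro equalityI subsetI)
    fix w assume "w \<in> phi g ` {v \<in> nbhd V E u. Norb v \<in> BB}"
    then obtain v where "v \<in> nbhd V E u" "Norb v \<in> BB" "w = phi g v"
      by blast
    then show "w \<in> {w \<in> nbhd V E u. Norb w \<in> qact (N #> g) ` BB}"
      using X iff by blast
  next
    fix w assume w: "w \<in> {w \<in> nbhd V E u. Norb w \<in> qact (N #> g) ` BB}"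
    then obtain v where "v \<in> nbhd V E u" "w = phi g v"
      using X by blast
    then show "w \<in> phi g ` {v \<in> nbhd V E u. Norb v \<in> BB}"
      using w iff by blast
  qed
qed

lemma nbhd_over_block:
  assumes "u \<in> V" "BB \<subseteq> Norbs"
    and block: "\<forall>C\<in>stab (G Mod N) qact (Norb u). qact C ` BB = BB \<or> qact C ` BB \<inter> BB = {}"
    and g: "g \<in> stab G phi u"
  shows "phi g ` nbhd_over u BB = nbhd_over u BB \<or> phi g ` nbhd_over u BB \<inter> nbhd_over u BB = {}"
proof -
  have "N #> g \<in> stab (G Mod N) qact (Norb u)"
    using g coset_mem_stab[OF _ assms(1)] unfolding stab_def by simp
  then have "qact (N #> g) ` BB = BB \<or> qact (N #> g) ` BB \<inter> BB = {}"
    using block by blast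
  then show ?thesis
    unfolding image_nbhd_over[OF assms(1) g assms(2)] unfolding nbhd_over_def by blast
qed

lemma quot_primitive_nbhd:
  assumes fin: "finite V" and u: "u \<in> V" and prim: "primitive_on phi (stab G phi u) (nbhd V E u)"
  shows "primitive_on qact (stab (G Mod N) qact (Norb u)) (nbhd Norbs qadj (Norb u))"
  unfolding primitive_on_def
proof (intro conjI allI impI)
  show "transitive_on qact (stab (G Mod N) qact (Norb u)) (nbhd Norbs qadj (Norb u))"
    using quot_nbhd_transitive[OF u] prim unfolding primitive_on_def by blast
next
  fix BB assume BB: "BB \<subseteq> nbhd Norbs qadj (Norb u)"
    and block: "\<forall>C\<in>stab (G Mod N) qact (Norb u). qact C ` BB = BB \<or> qact C ` BB \<inter> BB = {}"
  have BB_Norbs: "BB \<subseteq> Norbs"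
    using BB unfolding nbhd_def by blast
  let ?L = "nbhd_over u BB"
  have prim_blocks: "card L \<le> 1 \<or> L = nbhd V E u"
    if "L \<subseteq> nbhd V E u" "\<forall>h\<in>stab G phi u. phi h ` L = L \<or> phi h ` L \<inter> L = {}" for L
    using prim that unfolding primitive_on_def by blast
  have L_cases: "card ?L \<le> 1 \<or> ?L = nbhd V E u"
    by (rule prim_blocks) (use nbhd_over_block[OF u BB_Norbs block] nbhd_over_def in auto)
  have BB_eq: "BB = Norb ` ?L"
    using BB nbhd_qadj_subset[OF u] unfolding nbhd_over_def by blast
  show "card BB \<le> 1 \<or> BB = nbhd Norbs qadj (Norb u)"
    using L_cases
  proof
    assume "card ?L \<le> 1"
    moreover have "finite ?L"
      using fin unfolding nbhd_over_def nbhd_def by simp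
    ultimately show ?thesis
      using BB_eq card_image_le[of ?L Norb] by simp
  next
    assume "?L = nbhd V E u"
    then have "nbhd Norbs qadj (Norb u) \<subseteq> BB"
      using BB_eq nbhd_qadj_subset[OF u] by simp
    then show ?thesis
      using BB by (intro disjI2 subset_antisym)
  qed
qed

lemma quot_at_dist2_lift:
  assumes "u \<in> V" "at_dist2 qadj (Norb u) B"
  obtains z where "at_dist2 E u z" "B = Norb z"
proof -
  obtain B' where a: "qadj (Norb u) B'" and b: "qadj B' B"
    using assms(2) unfolding at_dist2_def by blast
  obtain y where y: "E u y" "B' = Norb y"
    using qadj_lift[OF assms(1) a] by blast
  obtain z where z: "E y z" "B = Norb z"
    using qadj_lift[of y B] adj_in_V(2)[OF y(1)] b y(2) by blast
  have ne: "Norb z \<noteq> Norb u" "\<not> qadj (Norb u) (Norb z)"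
    using assms(2) z(2) unfolding at_dist2_def by simp_all
  then have "z \<noteq> u" "\<not> E u z"
    using qadj_NorbI by metis+
  then have "at_dist2 E u z"
    unfolding at_dist2_def using y(1) z(1) by blast
  then show ?thesis
    using z(2) by (rule that)
qed

lemma quot_sphere2_transitive:
  assumes "u \<in> V" "transitive_on phi (stab G phi u) {v \<in> V. at_dist2 E u v}"
  shows "transitive_on qact (stab (G Mod N) qact (Norb u)) {B \<in> Norbs. at_dist2 qadj (Norb u) B}"
proof (rule quot_stab_transitive[OF assms])
  fix B assume "B \<in> {B \<in> Norbs. at_dist2 qadj (Norb u) B}"
  then obtain z where z: "at_dist2 E u z" "B = Norb z"
    using quot_at_dist2_lift[OF assms(1)] by blast
  moreover have "z \<in> V"
    using z(1) adj_in_V(2) unfolding at_dist2_def by blast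
  ultimately show "\<exists>z\<in>{v \<in> V. at_dist2 E u v}. B = Norb z"
    by blast
qed blast

end

section \<open>Normal quotients of 2-distance-transitive graphs\<close>

locale dt2_normal_quotient = graph_orbit_quotient G V phi N E
  for G :: "('g, 'b) monoid_scheme" (structure) and V :: "'a set" and phi N E +
  assumes finite_V: "finite V"
    and connected: "connected_graph V E"
    and dt2: "distance_transitive G phi V E 2"
    and three_le_card_Norbs: "3 \<le> card Norbs"
begin

lemma vertex_transitive: "transitive_on phi (carrier G) V"
  using dt2 unfolding distance_transitive_def by blast

lemma stab_transitive_sphere: "u \<in> V \<Longrightarrow> i \<le> 2 \<Longrightarrow> transitive_on phi (stab G phi u) (sphere V E u i)"
  using dt2 unfolding distance_transitive_def by blast

lemma stab_transitive_nbhd: "u \<in> V \<Longrightarrow> transitive_on phi (stab G phi u) (nbhd V E u)"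
  using stab_transitive_sphere[of u 1] sphere_1[of E u V, OF adj_irrefl] by simp

lemma stab_transitive_at_dist2: "u \<in> V \<Longrightarrow> transitive_on phi (stab G phi u) {v \<in> V. at_dist2 E u v}"
  using stab_transitive_sphere[of u 2] sphere_2[of E u V, OF adj_irrefl] by simp

lemma pair_transitive:
  assumes R_act: "\<And>g u v. g \<in> carrier G \<Longrightarrow> u \<in> V \<Longrightarrow> R u v \<Longrightarrow> R (phi g u) (phi g v)"
    and R_V: "\<And>u v. R u v \<Longrightarrow> v \<in> V"
    and stab_trans: "\<And>u. u \<in> V \<Longrightarrow> transitive_on phi (stab G phi u) {v \<in> V. R u v}"
    and "u \<in> V" "x \<in> V" "R u v" "R x y"
  shows "\<exists>g\<in>carrier G. phi g u = x \<and> phi g v = y"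
proof -
  obtain g where g: "g \<in> carrier G" "phi g u = x"
    using vertex_transitive assms(4,5) unfolding transitive_on_def by blast
  have "R x (phi g v)"
    using R_act[OF g(1) assms(4,6)] g(2) by simp
  then obtain h where h: "h \<in> stab G phi x" "phi h (phi g v) = y"
    using stab_trans[OF assms(5)] R_V assms(7) unfolding transitive_on_def by blast
  have "h \<in> carrier G" "phi h x = x"
    using h(1) unfolding stab_def by simp_all
  then show ?thesis
    using g h(2) assms(4) R_V[OF assms(6)] by (intro bexI[of _ "h \<otimes> g"]) (simp_all add: act_mult)
qed

lemma arc_transitive_G: "E u v \<Longrightarrow> E x y \<Longrightarrow> \<exists>g\<in>carrier G. phi g u = x \<and> phi g v = y"
  using pair_transitive[of E, OF adj_act _ _ adj_in_V(1) adj_in_V(1)] adj_in_V stab_transitive_nbhd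
  unfolding nbhd_def by blast

lemma at_dist2_transitive_G:
  assumes "at_dist2 E u v" "at_dist2 E x y"
  shows "\<exists>g\<in>carrier G. phi g u = x \<and> phi g v = y"
proof (rule pair_transitive[of "at_dist2 E"])
  show "v \<in> V" if "at_dist2 E u v" for u v
    using that adj_in_V unfolding at_dist2_def by blast
  show "u \<in> V" "x \<in> V"
    using assms adj_in_V unfolding at_dist2_def by blast+
qed (use assms at_dist2_act stab_transitive_at_dist2 in auto)

lemma Norbs_not_covered_by_two:
  assumes "x \<in> V" "y \<in> V" "V \<subseteq> Norb x \<union> Norb y"
  shows False
proof -
  have "Norbs \<subseteq> {Norb x, Norb y}"
    using assms Norb_eq unfolding orbits_of_def by blast
  then have "card Norbs \<le> card {Norb x, Norb y}"
    by (rule card_mono[rotated]) simp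
  also have "\<dots> \<le> 2"
    by (cases "Norb x = Norb y") simp_all
  finally show False
    using three_le_card_Norbs by simp
qed

lemma orbits_independent:
  assumes "x \<in> V" "y \<in> Norb x"
  shows "\<not> E x y"
proof
  assume "E x y"
  have "b \<in> Norb a" if ab: "E a b" for a b
  proof -
    obtain g where "g \<in> carrier G" "phi g x = a" "phi g y = b"
      using arc_transitive_G[OF \<open>E x y\<close> ab] by blast
    then show ?thesis
      using Norb_act assms by metis
  qed
  then have "v \<in> Norb x" if "v \<in> V" for v
    using connected_graph_closed_set[OF connected assms(1) that Norb_refl[OF assms(1)]]
      Norb_eq[OF assms(1)] adj_in_V by metis
  then show False
    using Norbs_not_covered_by_two[OF assms(1) assms(1)] by blast
qed

lemma neighbours_in_two_orbits:
  assumes "E a c"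
  shows "\<exists>x c1 c2. E x c1 \<and> E x c2 \<and> Norb c1 \<noteq> Norb c2"
proof (rule ccontr)
  assume one_orbit: "\<not> ?thesis"
  have step: "q \<in> Norb y" if p: "p \<in> Norb x" and xy: "E x y" and pq: "E p q" for x y p q
  proof -
    obtain y' where y': "y' \<in> Norb y" "E p y'"
      using adj_lift_Norb[OF adj_in_V(1)[OF xy] p xy] by blast
    have "Norb q = Norb y'"
      using one_orbit y'(2) pq by blast
    also have "\<dots> = Norb y"
      using Norb_eq[OF adj_in_V(2)[OF xy] y'(1)] .
    finally show ?thesis
      using Norb_refl[OF adj_in_V(2)[OF pq]] by simp
  qed
  have "q \<in> Norb a \<union> Norb c" if "p \<in> Norb a \<union> Norb c" "E p q" for p q
    using that step[OF _ assms] step[OF _ adj_sym[OF assms]] by blast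
  then have "v \<in> Norb a \<union> Norb c" if "v \<in> V" for v
    using connected_graph_closed_set[OF connected adj_in_V(1)[OF assms] that, of "Norb a \<union> Norb c"]
      Norb_refl[OF adj_in_V(1)[OF assms]] by blast
  then show False
    using Norbs_not_covered_by_two[OF adj_in_V[OF assms]] by blast
qed

lemma neighbour_in_other_orbit:
  assumes "E a c"
  obtains c' where "E a c'" "Norb c' \<noteq> Norb c"
proof -
  obtain x c1 c2 where c: "E x c1" "E x c2" "Norb c1 \<noteq> Norb c2"
    using neighbours_in_two_orbits[OF assms] by blast
  then obtain g where g: "g \<in> carrier G" "phi g x = a" "phi g c1 = c"
    using arc_transitive_G[OF c(1) assms] by blast
  have "E a (phi g c2)"
    using adj_act[OF g(1) c(2)] g(2) by simp
  moreover have "Norb (phi g c2) \<noteq> Norb c"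
    using Norb_act_eq_iff[OF g(1)] c adj_in_V g(3) by metis
  ultimately show ?thesis
    by (rule that)
qed

lemma at_dist2_Norb_transfer:
  assumes "at_dist2 E y y'" "y' \<in> Norb y" "at_dist2 E u v"
  shows "v \<in> Norb u"
proof -
  obtain g where "g \<in> carrier G" "phi g y = u" "phi g y' = v"
    using at_dist2_transitive_G[OF assms(1,3)] by blast
  then show ?thesis
    using Norb_act assms(1,2) adj_in_V unfolding at_dist2_def by metis
qed

context
  assumes at_dist2_Norb: "\<And>u v. at_dist2 E u v \<Longrightarrow> v \<in> Norb u"
begin

lemma adj_if_common_neighbour:
  assumes "E a c" "E a c'" "Norb c \<noteq> Norb c'"
  shows "E c c'"
proof (rule ccontr)
  assume "\<not> E c c'"
  moreover have "c' \<noteq> c"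
    using assms(3) by blast
  ultimately have "at_dist2 E c c'"
    using assms(1,2) adj_sym unfolding at_dist2_def by blast
  then have "c' \<in> Norb c"
    by (rule at_dist2_Norb)
  then show False
    using assms(3) Norb_eq adj_in_V(2)[OF assms(1)] by metis
qed

text \<open>No vertex is at distance 3: a vertex \<open>z\<close> at distance 2 from \<open>v\<close> lies in the orbit of \<open>v\<close>,
  every vertex has neighbours in two orbits, and vertices in distinct orbits with a common
  neighbour are adjacent.\<close>
lemma at_dist2_step:
  assumes "at_dist2 E v z" "E z z'" "z' \<noteq> v" "\<not> E v z'"
  shows "at_dist2 E v z'"
proof -
  obtain a where va: "E v a" and az: "E a z"
    using assms(1) unfolding at_dist2_def by blast
  have Nz: "Norb z = Norb v"
    using Norb_eq[OF adj_in_V(1)[OF va] at_dist2_Norb[OF assms(1)]] .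
  obtain c where ac: "E a c" and Nc: "Norb c \<noteq> Norb v"
    using neighbour_in_other_orbit[OF adj_sym[OF va]] by blast
  have cv: "E c v"
    using adj_if_common_neighbour[OF ac adj_sym[OF va] Nc] .
  have cz: "E c z"
    using adj_if_common_neighbour[OF ac az] Nc Nz by simp
  have "\<exists>w. E v w \<and> E w z'"
  proof (cases "Norb z' = Norb c")
    case False
    then have "E c z'"
      using adj_if_common_neighbour[OF adj_sym[OF cz] assms(2)] by simp
    then show ?thesis
      using adj_sym[OF cv] by blast
  next
    case True
    show ?thesis
    proof (rule ccontr)
      assume "\<nexists>w. E v w \<and> E w z'"
      then have "at_dist2 E a z'"
        using va az assms(2,4) unfolding at_dist2_def by blast
      then have "Norb c = Norb a"
        using True Norb_eq adj_in_V(1)[OF ac] at_dist2_Norb by metis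
      then show False
        using orbits_independent[OF adj_in_V(1)[OF ac]] Norb_refl[OF adj_in_V(2)[OF ac]] ac by simp
    qed
  qed
  then show ?thesis
    using assms(3,4) unfolding at_dist2_def by blast
qed

lemma within_distance_2:
  assumes "v \<in> V" "z \<in> V"
  shows "z = v \<or> E v z \<or> at_dist2 E v z"
proof -
  have "q = v \<or> E v q \<or> at_dist2 E v q" if "p = v \<or> E v p \<or> at_dist2 E v p" "E p q" for p q
    using that at_dist2_step unfolding at_dist2_def by blast
  then show ?thesis
    using connected_graph_closed_set[OF connected assms, of "{z. z = v \<or> E v z \<or> at_dist2 E v z}"]
    by blast
qed

lemma adj_iff_Norb_ne:
  assumes "u \<in> V" "v \<in> V"
  shows "E u v \<longleftrightarrow> Norb u \<noteq> Norb v"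
  using assms within_distance_2 at_dist2_Norb orbits_independent Norb_eq_iff by metis

lemma complete_multipartite:
  assumes "v \<in> V"
  shows "is_complete_multipartite V E (card Norbs) (card (Norb v))"
  unfolding is_complete_multipartite_def
proof (intro exI[of _ Norbs] conjI ballI impI refl)
  show "\<Union>Norbs = V"
    by (rule Union_Norbs)
  show "B \<inter> B' = {}" if "B \<in> Norbs" "B' \<in> Norbs" "B \<noteq> B'" for B B'
    using that by (rule Norbs_disjoint)
  show "card B = card (Norb v)" if "B \<in> Norbs" for B
    using that card_Norb_eq[OF vertex_transitive _ assms] by (metis Norbs_memE)
  show "E u w \<longleftrightarrow> \<not> (\<exists>B\<in>Norbs. u \<in> B \<and> w \<in> B)" if "u \<in> V" "w \<in> V" for u w
    using adj_iff_Norb_ne[OF that] common_Norbs_iff[OF that] by simp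
qed

end

lemma two_neighbours_in_orbit_multipartite:
  assumes "E x y" "E x y'" "y' \<noteq> y" "y' \<in> Norb y"
  shows "is_complete_multipartite V E (card Norbs) (card (Norb y))" "2 \<le> card (Norb y)"
proof -
  have yV: "y \<in> V"
    using adj_in_V(2)[OF assms(1)] .
  have "at_dist2 E y y'"
    using assms adj_sym orbits_independent[OF yV] unfolding at_dist2_def by blast
  then show "is_complete_multipartite V E (card Norbs) (card (Norb y))"
    using complete_multipartite at_dist2_Norb_transfer assms(4) yV by blast
  have "card {y, y'} \<le> card (Norb y)"
    using assms(4) Norb_refl[OF yV] Norb_subset[OF yV] finite_V
    by (intro card_mono) (auto intro: finite_subset)
  then show "2 \<le> card (Norb y)"
    using assms(3) by simp
qed

lemma is_cover:
  assumes not_multipartite: "\<not> (\<exists>m b. m \<ge> 3 \<and> b \<ge> 2 \<and> is_complete_multipartite V E m b)"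
  shows "is_cover V E Norbs"
  unfolding is_cover_def
proof (intro ballI impI)
  fix B B' x assume B: "B \<in> Norbs" and "B' \<in> Norbs" and adj: "qadj B B'" and x: "x \<in> B"
  have "B = Norb x" "x \<in> V"
    using Norbs_eq_Norb[OF B x] Norbs_subset[OF B] x by auto
  then obtain y where y: "y \<in> B'" "E x y" "B' = Norb y"
    using qadj_lift adj by metis
  show "\<exists>!y. y \<in> B' \<and> E x y"
  proof (intro ex1I[of _ y] conjI y(1,2))
    fix y' assume "y' \<in> B' \<and> E x y'"
    then show "y' = y"
      using two_neighbours_in_orbit_multipartite[OF y(2)] y(3) not_multipartite three_le_card_Norbs
      by blast
  qed
qed

lemma adj_imp_qadj: "E x y \<Longrightarrow> qadj (Norb x) (Norb y)"
  using qadj_NorbI orbits_independent adj_in_V Norb_eq_iff by metis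

lemma fix_one_imp_fix_all:
  assumes cover: "is_cover V E Norbs" and n: "n \<in> N" and "v \<in> V" "phi n v = v" "z \<in> V"
  shows "phi n z = z"
proof -
  have cover_unique: "\<exists>!y. y \<in> B' \<and> E x y" if "B \<in> Norbs" "B' \<in> Norbs" "qadj B B'" "x \<in> B" for B B' x
    using cover that unfolding is_cover_def by blast
  have "phi n b = b" if a: "phi n a = a" and ab: "E a b" for a b
  proof -
    have "E a (phi n b)"
      using adj_act[OF _ ab] a n subset by force
    moreover have "\<exists>!y. y \<in> Norb b \<and> E a y"
      using cover_unique[OF Norbs_memI[OF adj_in_V(1)[OF ab]] Norbs_memI[OF adj_in_V(2)[OF ab]]
          adj_imp_qadj[OF ab] Norb_refl[OF adj_in_V(1)[OF ab]]] .
    ultimately show ?thesis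
      using ab Norb_memI[OF n] Norb_refl[OF adj_in_V(2)[OF ab]] by blast
  qed
  then show ?thesis
    using connected_graph_closed_set[OF connected \<open>v \<in> V\<close> \<open>z \<in> V\<close>, of "{z. phi n z = z}"]
      \<open>phi n v = v\<close> by blast
qed

lemma semiregular:
  assumes "is_cover V E Norbs"
  shows "semiregular G phi N V"
  unfolding semiregular_def
proof (intro ballI impI)
  fix v n assume "v \<in> V" "n \<in> N" "phi n v = v"
  then have nG: "n \<in> carrier G"
    using subset by blast
  have "phi n z = phi \<one> z" for z
  proof (cases "z \<in> V")
    case True
    then show ?thesis
      using fix_one_imp_fix_all[OF assms \<open>n \<in> N\<close> \<open>v \<in> V\<close> \<open>phi n v = v\<close>] act_one by simp
  next
    case False
    then show ?thesis
      using Bij_imp_extensional[OF bij_prop0] nG one_closed extensional_arb by metis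
  qed
  then show "n = \<one>"
    using dt2 nG one_closed unfolding distance_transitive_def aut_action_def by (metis ext inj_onD)
qed

lemma walk_quot_adj: "walk E x y n \<Longrightarrow> walk qadj (Norb x) (Norb y) n"
  by (induction rule: walk.induct) (auto intro: walk.intros adj_imp_qadj)

lemma quot_diam_ge_2:
  assumes "\<not> complete_graph Norbs qadj"
  shows "2 \<le> diam Norbs qadj"
proof -
  obtain B1 B2 where B: "B1 \<in> Norbs" "B2 \<in> Norbs" "B1 \<noteq> B2" "\<not> qadj B1 B2"
    using assms unfolding complete_graph_def by blast
  then obtain x y where xy: "x \<in> V" "B1 = Norb x" "y \<in> V" "B2 = Norb y"
    by (metis Norbs_memE)
  then obtain n where "walk E x y n"
    using connected unfolding connected_graph_def by blast
  then have "2 \<le> gdist qadj B1 B2"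
    using walk_quot_adj gdist_ge_2 B(3,4) xy by metis
  also have "\<dots> \<le> diam Norbs qadj"
    using gdist_le_diam[OF _ B(1,2)] finite_V by (simp add: orbits_of_def)
  finally show ?thesis .
qed

lemma quot_arc_transitive_pairs:
  assumes "qadj B1 B2" "qadj B3 B4"
  shows "\<exists>C\<in>carrier (G Mod N). qact C B1 = B3 \<and> qact C B2 = B4"
proof -
  obtain x1 x3 where x: "x1 \<in> V" "B1 = Norb x1" "x3 \<in> V" "B3 = Norb x3"
    using qadj_Norbs(1)[OF assms(1)] qadj_Norbs(1)[OF assms(2)] by (metis Norbs_memE)
  obtain y1 y3 where y: "E x1 y1" "B2 = Norb y1" "E x3 y3" "B4 = Norb y3"
    using qadj_lift assms x by metis
  obtain g where "g \<in> carrier G" "phi g x1 = x3" "phi g y1 = y3"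
    using arc_transitive_G[OF y(1,3)] by blast
  then show ?thesis
    using x y adj_in_V qact_coset_Norb unfolding carrier_FactGroup by blast
qed

end

section \<open>Normal subgroups maximal with at least three orbits\<close>

locale dt2_maximal_quotient = dt2_normal_quotient G V phi N E
  for G :: "('g, 'b) monoid_scheme" (structure) and V :: "'a set" and phi N E +
  assumes maximal: "\<And>M. M \<lhd> G \<Longrightarrow> N \<subseteq> M \<Longrightarrow> 3 \<le> card (orbits_of phi M V) \<Longrightarrow> M = N"
begin

lemma orbits_kernel_eq: "orbits_kernel = N"
  using maximal[OF orbits_kernel_normal N_subset_orbits_kernel] orbits_of_orbits_kernel three_le_card_Norbs
  by simp

lemma quot_aut: "aut_action (G Mod N) qact Norbs qadj"
  using quot_aut_action qact_faithful orbits_kernel_eq by simp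

lemma card_orbits_quot_normal_le_2:
  assumes M: "M \<lhd> G Mod N" and ne: "M \<noteq> {N}"
  shows "card (orbits_of qact M Norbs) \<le> 2"
proof -
  have sub: "subgroup M (G Mod N)"
    using M by (rule normal_imp_subgroup)
  have NM: "N \<in> M"
    using subgroup.one_closed[OF sub] by simp
  have "card (orbits_of phi (\<Union>M) V) \<le> 2"
  proof (rule ccontr)
    assume "\<not> ?thesis"
    moreover have "N \<subseteq> \<Union>M"
      using NM by blast
    ultimately have UM: "\<Union>M = N"
      using maximal[OF factgroup_subgroup_union_normal[OF M]] by simp
    have "C = N" if C: "C \<in> M" for C
    proof -
      obtain g where g: "g \<in> carrier G" "C = N #> g"
        using C subgroup.subset[OF sub] unfolding carrier_FactGroup by blast
      then have "g \<in> N"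
        using C UM rcos_self[OF _ is_subgroup] by blast
      then show ?thesis
        using g coset_join2[OF _ is_subgroup] by simp
    qed
    then show False
      using ne NM by blast
  qed
  then show ?thesis
    using card_orbits_qact_le[OF sub finite_V] by linarith
qed

lemma quasiprimitive_or_biquasiprimitive:
  "quasiprimitive (G Mod N) qact Norbs \<or> biquasiprimitive (G Mod N) qact Norbs"
proof (cases "\<forall>M. M \<lhd> G Mod N \<longrightarrow> M \<noteq> {N} \<longrightarrow> transitive_on qact M Norbs")
  case True
  then show ?thesis
    unfolding quasiprimitive_def using quot_transitive[OF vertex_transitive] by simp
next
  case False
  then obtain M where M: "M \<lhd> G Mod N" "M \<noteq> {N}" "\<not> transitive_on qact M Norbs"
    by blast
  have "\<not> card (orbits_of qact M Norbs) \<le> 1"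
    using M(3) transitive_on_if_card_orbits_le_1 finite_V qact_orbit_refl[OF normal_imp_subgroup[OF M(1)]]
    by (metis finite_imageI orbits_of_def)
  then have "card (orbits_of qact M Norbs) = 2"
    using card_orbits_quot_normal_le_2[OF M(1,2)] by simp
  then show ?thesis
    unfolding biquasiprimitive_def using quot_transitive[OF vertex_transitive]
      card_orbits_quot_normal_le_2 M by auto
qed

lemma quot_arc_transitive: "arc_transitive (G Mod N) qact Norbs qadj"
  unfolding arc_transitive_def using quot_aut quot_arc_transitive_pairs by blast

lemma quot_distance_transitive:
  assumes "\<not> complete_graph Norbs qadj"
  shows "distance_transitive (G Mod N) qact Norbs qadj 2"
  unfolding distance_transitive_def
proof (intro conjI ballI allI impI quot_aut quot_diam_ge_2[OF assms] quot_transitive[OF vertex_transitive])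
  fix B i assume B: "B \<in> Norbs" and "i \<le> (2::nat)"
  obtain u where u: "u \<in> V" "B = Norb u"
    using B by (rule Norbs_memE)
  consider "i = 0" | "i = 1" | "i = 2"
    using \<open>i \<le> 2\<close> by linarith
  then show "transitive_on qact (stab (G Mod N) qact B) (sphere Norbs qadj B i)"
  proof cases
    case 1
    then show ?thesis
      using sphere_0[OF B] N_mem_stab[OF B] qact_N[OF B] unfolding transitive_on_def by auto
  next
    case 2
    then show ?thesis
      using quot_nbhd_transitive[OF u(1) stab_transitive_nbhd[OF u(1)]] u(2)
        sphere_1[of qadj B Norbs, OF qadj_irrefl] by simp
  next
    case 3
    then show ?thesis
      using quot_sphere2_transitive[OF u(1) stab_transitive_at_dist2[OF u(1)]] u(2)
        sphere_2[of qadj B Norbs, OF qadj_irrefl] by simp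
  qed
qed

lemma quot_locally_primitive:
  assumes "locally_primitive G phi V E"
  shows "locally_primitive (G Mod N) qact Norbs qadj"
  unfolding locally_primitive_def
proof (intro conjI ballI quot_aut)
  fix B assume "B \<in> Norbs"
  then obtain u where "u \<in> V" "B = Norb u"
    by (rule Norbs_memE)
  then show "primitive_on qact (stab (G Mod N) qact B) (nbhd Norbs qadj B)"
    using quot_primitive_nbhd[OF finite_V] assms unfolding locally_primitive_def by blast
qed

end

theorem theorem4p1:
  fixes G :: "('g, 'b) monoid_scheme" and phi :: "'g \<Rightarrow> 'a \<Rightarrow> 'a"
    and V :: "'a set" and E :: "'a \<Rightarrow> 'a \<Rightarrow> bool" and N :: "'g set"
  assumes grp: "group G"
    and graph: "sgraph V E" and fin: "finite V" and conn: "connected_graph V E"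
    and dt: "distance_transitive G phi V E 2"
    and not_cmp: "\<not> (\<exists>m b. m \<ge> 3 \<and> b \<ge> 2 \<and> is_complete_multipartite V E m b)"
    and N_normal: "normal N G"
    and N_orbs: "card (orbits_of phi N V) \<ge> 3"
    and N_max: "\<And>M. normal M G \<Longrightarrow> N \<subseteq> M \<Longrightarrow> card (orbits_of phi M V) \<ge> 3 \<Longrightarrow> M = N"
  shows "semiregular G phi N V
    \<and> (quasiprimitive (G Mod N) (quot_act phi N V) (orbits_of phi N V)
       \<or> biquasiprimitive (G Mod N) (quot_act phi N V) (orbits_of phi N V))
    \<and> is_cover V E (orbits_of phi N V)
    \<and> ((complete_graph (orbits_of phi N V) (quot_adj (orbits_of phi N V) E)
         \<and> arc_transitive (G Mod N) (quot_act phi N V) (orbits_of phi N V) (quot_adj (orbits_of phi N V) E))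
       \<or> (\<not> complete_graph (orbits_of phi N V) (quot_adj (orbits_of phi N V) E)
         \<and> distance_transitive (G Mod N) (quot_act phi N V) (orbits_of phi N V) (quot_adj (orbits_of phi N V) E) 2))
    \<and> (locally_primitive G phi V E \<longrightarrow>
         locally_primitive (G Mod N) (quot_act phi N V) (orbits_of phi N V) (quot_adj (orbits_of phi N V) E))
    \<and> (odd (card V) \<longrightarrow> odd (card (orbits_of phi N V)))"
proof -
  have aut: "aut_action G phi V E"
    using dt unfolding distance_transitive_def by blast
  interpret orbit_quotient G V phi N
    using aut N_normal unfolding aut_action_def by (intro orbit_quotient.intro) simp_all
  interpret graph_orbit_quotient G V phi N E
    using aut graph unfolding aut_action_def by unfold_locales blast+
  interpret dt2_maximal_quotient G V phi N E
    by unfold_locales (use fin conn dt N_orbs N_max in auto)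
  have cover: "is_cover V E Norbs"
    using is_cover not_cmp by blast
  show ?thesis
    using semiregular[OF cover] quasiprimitive_or_biquasiprimitive cover
      quot_arc_transitive quot_distance_transitive quot_locally_primitive
      odd_card_Norbs[OF vertex_transitive fin] by blast
qed

end
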